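(* Let $q$ be a prime power and $n\ge1$. If $a,b$ are integers with $1\le a<b\le n(q-1)$, then $\dim(C_{n,b}^q)-\dim(C_{n,a}^q)\ge b-a$.
   Context: For a prime power $q$ and integers $n\ge 1$, $k\ge 0$, the projective Reed-Muller code $C_{n,k}^q\subseteq \mathbb{F}_q^N$, $N=\frac{q^{n+1}-1}{q-1}$, is defined as follows. For each point of $\mathbb{P}^n(\mathbb{F}_q)$ choose the affine representative $(p_0,\dots,p_n)\in\mathbb{F}_q^{n+1}\setminus\{0\}$ whose left-most nonzero coordinate equals $1$, and fix an ordering $P_1',\dots,P_N'$ of these representatives. Then $C_{n,k}^q=\{(F(P_1'),\dots,F(P_N')) : F\in \mathbb{F}_q[x_0,\dots,x_n]_k\}$, where $\mathbb{F}_q[x_0,\dots,x_n]_k$ is the space of homogeneous polynomials of degree $k$ together with $0$. *)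

theory Defs
  imports Complex_Main "HOL-Library.Function_Algebras"
begin

text \<open>Normalized affine representatives of the points of P^n(F_q): vectors
  p = (p_0,...,p_n) (coordinates beyond n are 0), p nonzero, whose left-most
  nonzero coordinate equals 1.\<close>
definition proj_points :: "nat \<Rightarrow> (nat \<Rightarrow> 'a::field) set" where
  "proj_points n = {p. (\<forall>i>n. p i = 0) \<and>
      (\<exists>j\<le>n. p j = 1 \<and> (\<forall>i<j. p i = 0))}"

definition monomials :: "nat \<Rightarrow> nat \<Rightarrow> (nat \<Rightarrow> nat) set" where
  "monomials n k = {e. (\<forall>i>n. e i = 0) \<and> (\<Sum>i\<le>n. e i) = k}"

definition hom_eval :: "nat \<Rightarrow> nat \<Rightarrow> ((nat \<Rightarrow> nat) \<Rightarrow> 'a::field) \<Rightarrow> (nat \<Rightarrow> 'a) \<Rightarrow> 'a" where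
  "hom_eval n k c p = (\<Sum>e\<in>monomials n k. c e * (\<Prod>i\<le>n. p i ^ e i))"

text \<open>The projective Reed-Muller code C_{n,k}: codewords are indexed by the
  points of proj_points n (value 0 outside this index set).\<close>
definition proj_RM :: "nat \<Rightarrow> nat \<Rightarrow> ((nat \<Rightarrow> 'a::field) \<Rightarrow> 'a) set" where
  "proj_RM n k = {(\<lambda>p. if p \<in> proj_points n then hom_eval n k c p else 0) | c. True}"

definition code_dim :: "((nat \<Rightarrow> 'a::field) \<Rightarrow> 'a) set \<Rightarrow> nat" where
  "code_dim C = vector_space.dim (\<lambda>(a::'a) f x. a * f x) C"

end

theory Submission
  imports Defs "HOL-Computational_Algebra.Polynomial" "HOL-Library.FuncSet"
begin

text \<open>
  Put D = q - 1. Since x^q = x on F_q, every monomial of degree k >= 1 agrees on the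
  normalized representatives with a reduced monomial: exponents in {0..D}, not all zero,
  total degree at most k and congruent to k modulo D; conversely, padding a nonzero exponent
  by a multiple of D turns a reduced monomial into one of degree k. The reduced monomials are
  linearly independent as functions on the representatives: sorting the points by the position
  of their leading 1 reduces this to the fact that a polynomial with all partial degrees below
  q vanishing on F_q^m is zero, and the congruence pins down the exponent of the leading
  variable. So dim C_{n,k} counts the reduced exponent vectors of degree k. Cyclically raising
  the first nonzero exponent within {1..D} maps those of degree k injectively to those of
  degree k + 1, and for k < nD it misses one with leading exponent 1.
\<close>

lemma sum_fun_apply: "(\<Sum>x\<in>A. f x) p = (\<Sum>x\<in>A. f x p)"
  by (induct A rule: infinite_finite_induct) auto

lemma sum_eq_fun_upd_zero:
  fixes f :: "'a \<Rightarrow> 'b::comm_monoid_add"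
  assumes "finite A" "j \<in> A"
  shows "sum f A = f j + sum (f(j := 0)) A"
proof -
  have "sum (f(j := 0)) A = sum (f(j := 0)) (A - {j})"
    using sum.remove[OF assms, of "f(j := 0)"] by simp
  also have "\<dots> = sum f (A - {j})" by (rule sum.cong) auto
  finally show ?thesis using sum.remove[OF assms, of f] by simp
qed

lemma vector_space_fun_scale: "vector_space (\<lambda>(a::'a::field) (f::'b \<Rightarrow> 'a) x. a * f x)"
  by unfold_locales (simp_all add: fun_eq_iff algebra_simps)

lemma finite_bounded_funs: "finite {e::nat \<Rightarrow> nat. (\<forall>i>n. e i = 0) \<and> (\<forall>i. e i \<le> B)}"
proof (rule finite_subset)
  show "{e::nat \<Rightarrow> nat. (\<forall>i>n. e i = 0) \<and> (\<forall>i. e i \<le> B)}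
      \<subseteq> (\<lambda>f i. if i \<le> n then f i else 0) ` (\<Pi>\<^sub>E i\<in>{..n}. {..B})"
  proof
    fix e :: "nat \<Rightarrow> nat" assume e: "e \<in> {e. (\<forall>i>n. e i = 0) \<and> (\<forall>i. e i \<le> B)}"
    then have "e = (\<lambda>i. if i \<le> n then restrict e {..n} i else 0)"
      by (auto simp: fun_eq_iff)
    moreover have "restrict e {..n} \<in> (\<Pi>\<^sub>E i\<in>{..n}. {..B})" using e by auto
    ultimately show "e \<in> (\<lambda>f i. if i \<le> n then f i else 0) ` (\<Pi>\<^sub>E i\<in>{..n}. {..B})" by blast
  qed
qed (intro finite_imageI finite_PiE; simp)

lemma finite_monomials: "finite (monomials n k)"
proof (rule finite_subset[OF _ finite_bounded_funs[of n k]])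
  show "monomials n k \<subseteq> {e. (\<forall>i>n. e i = 0) \<and> (\<forall>i. e i \<le> k)}"
  proof safe
    fix e i assume e: "e \<in> monomials n k"
    then show "e i = 0" if "n < i" using that by (simp add: monomials_def)
    show "e i \<le> k"
    proof (cases "i \<le> n")
      case True
      then show ?thesis using e member_le_sum[of i "{..n}" e] by (simp add: monomials_def)
    qed (use e in \<open>simp add: monomials_def\<close>)
  qed
qed

section \<open>Finite fields\<close>

lemma card_UNIV_field_ge_two: "card (UNIV :: 'a::{finite,field} set) \<ge> 2"
proof -
  have "card {0::'a, 1} \<le> card (UNIV :: 'a set)" by (rule card_mono) auto
  then show ?thesis by simp
qed

lemma finite_field_power_card_minus_one:
  fixes x :: "'a::{finite,field}"
  assumes "x \<noteq> 0"
  shows "x ^ (card (UNIV :: 'a set) - 1) = 1"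
proof -
  let ?U = "UNIV - {0::'a}"
  have "bij_betw (\<lambda>y. x * y) ?U ?U"
    by (rule bij_betwI[where g = "\<lambda>y. y / x"]) (use assms in auto)
  then have "(\<Prod>y\<in>?U. x * y) = (\<Prod>y\<in>?U. y)"
    using prod.reindex_bij_betw[of "\<lambda>y. x * y" ?U ?U "\<lambda>y. y"] by simp
  moreover have "(\<Prod>y\<in>?U. x * y) = x ^ card ?U * (\<Prod>y\<in>?U. y)"
    by (simp add: prod.distrib)
  moreover have "(\<Prod>y\<in>?U. y) \<noteq> 0" by simp
  ultimately show ?thesis by (simp add: card_Diff_singleton)
qed

lemma finite_field_power_add_multiple:
  fixes x :: "'a::{finite,field}"
  assumes "m \<ge> 1"
  shows "x ^ (m + (card (UNIV :: 'a set) - 1) * t) = x ^ m"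
proof (cases "x = 0")
  case True
  then show ?thesis using assms by (simp add: power_0_left)
next
  case False
  then show ?thesis
    using finite_field_power_card_minus_one[OF False] by (simp add: power_add power_mult)
qed

text \<open>The exponent that x^m reduces to via x^q = x: the representative of m modulo D in
  {1..D}, except that 0 stays 0.\<close>

definition reduce_exp :: "nat \<Rightarrow> nat \<Rightarrow> nat" where
  "reduce_exp D m = (if m = 0 then 0 else (m - 1) mod D + 1)"

lemma reduce_exp_le: "reduce_exp D m \<le> m"
  by (cases m) (simp_all add: reduce_exp_def mod_less_eq_dividend)

lemma reduce_exp_le_modulus: "D \<ge> 1 \<Longrightarrow> reduce_exp D m \<le> D"
  by (auto simp: reduce_exp_def Suc_le_eq)

lemma reduce_exp_eq_0_iff [simp]: "reduce_exp D m = 0 \<longleftrightarrow> m = 0"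
  by (simp add: reduce_exp_def)

lemma reduce_exp_mod: "reduce_exp D m mod D = m mod D"
  by (auto simp: reduce_exp_def mod_Suc_eq)

lemma finite_field_power_reduce_exp:
  fixes x :: "'a::{finite,field}"
  shows "x ^ reduce_exp (card (UNIV :: 'a set) - 1) m = x ^ m"
proof (cases "m = 0")
  case False
  let ?D = "card (UNIV :: 'a set) - 1"
  have "m = ((m - 1) mod ?D + 1) + ?D * ((m - 1) div ?D)"
    using False by simp
  then have "x ^ m = x ^ ((m - 1) mod ?D + 1)"
    by (metis finite_field_power_add_multiple le_add2)
  then show ?thesis by (simp add: reduce_exp_def False)
qed (simp add: reduce_exp_def)

section \<open>Polynomials vanishing on a finite field\<close>

lemma coeff_zero_if_vanishing_on_finite_field:
  fixes c :: "nat \<Rightarrow> 'a::{finite,field}"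
  assumes "\<And>x. (\<Sum>d\<le>card (UNIV :: 'a set) - 1. c d * x ^ d) = 0"
    and "d \<le> card (UNIV :: 'a set) - 1"
  shows "c d = 0"
proof -
  let ?D = "card (UNIV :: 'a set) - 1"
  define p where "p = (\<Sum>d\<le>?D. monom (c d) d)"
  have "degree p \<le> ?D" unfolding p_def
    by (rule degree_sum_le) (auto intro: order.trans[OF degree_monom_le])
  moreover have "{x. poly p x = 0} = UNIV"
    using assms(1) by (simp add: p_def poly_sum poly_monom)
  ultimately have "p = 0"
    using card_poly_roots_bound[of p] card_UNIV_field_ge_two[where 'a = 'a] by fastforce
  moreover have "coeff p d = c d"
    using assms(2) by (simp add: p_def coeff_sum coeff_monom)
  ultimately show ?thesis by simp
qed

lemma reduced_vanishing_slice:
  fixes w :: "(nat \<Rightarrow> nat) \<Rightarrow> 'a::{finite,field}"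
  assumes "finite S" "finite T" "s \<notin> S"
    and "\<And>t. t \<in> T \<Longrightarrow> t s \<le> card (UNIV :: 'a set) - 1"
    and "\<And>y. (\<Sum>t\<in>T. w t * (\<Prod>i\<in>insert s S. y i ^ t i)) = 0"
    and "d \<le> card (UNIV :: 'a set) - 1"
  shows "(\<Sum>t\<in>{t\<in>T. t s = d}. w t * (\<Prod>i\<in>S. y i ^ t i)) = 0"
proof -
  let ?D = "card (UNIV :: 'a set) - 1"
  define c where "c d = (\<Sum>t\<in>{t\<in>T. t s = d}. w t * (\<Prod>i\<in>S. y i ^ t i))" for d
  have "(\<Sum>d\<le>?D. c d * x ^ d) = 0" for x
  proof -
    have prod_upd: "(\<Prod>i\<in>insert s S. (y(s := x)) i ^ t i) = x ^ t s * (\<Prod>i\<in>S. y i ^ t i)"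
      for t
    proof -
      have "(\<Prod>i\<in>S. (y(s := x)) i ^ t i) = (\<Prod>i\<in>S. y i ^ t i)"
        using assms(3) by (intro prod.cong) auto
      then show ?thesis using assms(1,3) by simp
    qed
    have "(\<Sum>d\<le>?D. c d * x ^ d)
        = (\<Sum>d\<le>?D. \<Sum>t\<in>{t\<in>T. t s = d}. w t * (\<Prod>i\<in>insert s S. (y(s := x)) i ^ t i))"
      unfolding c_def sum_distrib_right prod_upd
      by (intro sum.cong refl) (simp add: algebra_simps)
    also have "\<dots> = (\<Sum>t\<in>T. w t * (\<Prod>i\<in>insert s S. (y(s := x)) i ^ t i))"
      by (rule sum.group) (use assms(2,4) in auto)
    also have "\<dots> = 0" by (rule assms(5))
    finally show ?thesis .
  qed
  then show ?thesis
    using coeff_zero_if_vanishing_on_finite_field[of c d] assms(6) by (simp add: c_def)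
qed

lemma coeff_zero_if_reduced_vanishing:
  fixes w :: "(nat \<Rightarrow> nat) \<Rightarrow> 'a::{finite,field}"
  assumes "finite S" "finite T"
    and "\<forall>t\<in>T. (\<forall>i. t i \<le> card (UNIV :: 'a set) - 1) \<and> (\<forall>i. i \<notin> S \<longrightarrow> t i = 0)"
    and "\<forall>y::nat \<Rightarrow> 'a. (\<Sum>t\<in>T. w t * (\<Prod>i\<in>S. y i ^ t i)) = 0"
  shows "\<forall>t\<in>T. w t = 0"
  using assms
proof (induct S arbitrary: T w rule: finite_induct)
  case empty
  then have "T \<subseteq> {\<lambda>_. 0}" by auto
  then consider "T = {}" | "T = {\<lambda>_. 0}" by blast
  then show ?case using empty.prems(3) by cases auto
next
  case (insert s S)
  show ?case
  proof
    fix t assume t: "t \<in> T"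
    define d where "d = t s"
    let ?drop = "\<lambda>t. t(s := 0)"
    let ?Td = "{t\<in>T. t s = d}"
    have inj: "inj_on ?drop ?Td"
      by (rule inj_on_inverseI[where g = "\<lambda>t. t(s := d)"]) auto
    have "\<forall>t'\<in>?drop ` ?Td. w (t'(s := d)) = 0"
    proof (rule insert.hyps(3))
      show "finite (?drop ` ?Td)" using insert.prems(1) by auto
      show "\<forall>t\<in>?drop ` ?Td. (\<forall>i. t i \<le> card (UNIV :: 'a set) - 1) \<and> (\<forall>i. i \<notin> S \<longrightarrow> t i = 0)"
        using insert.prems(2) by auto
      show "\<forall>y. (\<Sum>t\<in>?drop ` ?Td. w (t(s := d)) * (\<Prod>i\<in>S. y i ^ t i)) = 0"
      proof
        fix y :: "nat \<Rightarrow> 'a"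
        have "(\<Sum>t\<in>?drop ` ?Td. w (t(s := d)) * (\<Prod>i\<in>S. y i ^ t i))
            = (\<Sum>t\<in>?Td. w t * (\<Prod>i\<in>S. y i ^ t i))"
          unfolding sum.reindex[OF inj] using insert.hyps(2)
          by (intro sum.cong refl) (auto intro!: prod.cong)
        also have "\<dots> = 0"
          by (rule reduced_vanishing_slice) (use insert t in \<open>auto simp: d_def\<close>)
        finally show "(\<Sum>t\<in>?drop ` ?Td. w (t(s := d)) * (\<Prod>i\<in>S. y i ^ t i)) = 0" .
      qed
    qed
    moreover have "?drop t \<in> ?drop ` ?Td" using t d_def by auto
    ultimately have "w ((?drop t)(s := d)) = 0" by blast
    then show "w t = 0" by (simp add: d_def)
  qed
qed

section \<open>Reduced monomials on the projective points\<close>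

definition reduced_exponents :: "nat \<Rightarrow> nat \<Rightarrow> nat \<Rightarrow> (nat \<Rightarrow> nat) set" where
  "reduced_exponents D n k = {e. (\<forall>i. e i \<le> D) \<and> (\<forall>i>n. e i = 0) \<and> (\<exists>i. e i \<noteq> 0) \<and>
     (\<Sum>i\<le>n. e i) mod D = k mod D \<and> (\<Sum>i\<le>n. e i) \<le> k}"

definition monomial_fun :: "nat \<Rightarrow> (nat \<Rightarrow> nat) \<Rightarrow> (nat \<Rightarrow> 'a::field) \<Rightarrow> 'a" where
  "monomial_fun n e p = (if p \<in> proj_points n then \<Prod>i\<le>n. p i ^ e i else 0)"

lemma finite_reduced_exponents: "finite (reduced_exponents D n k)"
  by (rule finite_subset[OF _ finite_bounded_funs[of n D]]) (auto simp: reduced_exponents_def)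

lemma reduced_exponents_eq_if_same_tail:
  assumes "e \<in> reduced_exponents D n k" "e' \<in> reduced_exponents D n k"
    and "j \<le> n" "e j \<noteq> 0" "e' j \<noteq> 0" "e(j := 0) = e'(j := 0)"
  shows "e = e'"
proof -
  define r where "r = (\<Sum>i\<le>n. (e(j := 0)) i)"
  have "(\<Sum>i\<le>n. e i) = e j + r" "(\<Sum>i\<le>n. e' i) = e' j + r"
    unfolding r_def using assms(3,6) by (metis atMost_iff finite_atMost sum_eq_fun_upd_zero)+
  then have "(e j + r) mod D = (e' j + r) mod D"
    using assms(1,2) by (simp add: reduced_exponents_def)
  then have "e j mod D = e' j mod D"
    by (simp add: mod_eq_iff_dvd_symdiff_nat)
  moreover have "e j \<le> D" "e' j \<le> D"
    using assms(1,2) by (auto simp: reduced_exponents_def)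
  ultimately have "e j = e' j"
    using assms(4,5) by (metis dual_order.antisym leI mod_less mod_self not_one_le_zero
        less_one linorder_not_less)
  then show ?thesis using assms(6) by (metis fun_upd_triv fun_upd_upd)
qed

lemma reduce_exp_in_reduced_exponents:
  assumes "D \<ge> 1" "k \<ge> 1" "e \<in> monomials n k"
  shows "(\<lambda>i. reduce_exp D (e i)) \<in> reduced_exponents D n k"
proof -
  have e: "\<forall>i>n. e i = 0" "(\<Sum>i\<le>n. e i) = k" using assms(3) by (auto simp: monomials_def)
  then obtain i where "e i \<noteq> 0" using assms(2) by force
  then have "\<exists>i. reduce_exp D (e i) \<noteq> 0" by (metis reduce_exp_eq_0_iff)
  moreover have "(\<Sum>i\<le>n. reduce_exp D (e i)) mod D = k mod D"
  proof -
    have "(\<Sum>i\<le>n. reduce_exp D (e i)) mod D = (\<Sum>i\<le>n. reduce_exp D (e i) mod D) mod D"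
      by (simp add: mod_sum_eq)
    also have "\<dots> = (\<Sum>i\<le>n. e i) mod D" by (simp add: reduce_exp_mod mod_sum_eq)
    finally show ?thesis using e(2) by simp
  qed
  moreover have "(\<Sum>i\<le>n. reduce_exp D (e i)) \<le> k"
    using e(2) sum_mono[of "{..n}" "\<lambda>i. reduce_exp D (e i)" e] reduce_exp_le by simp
  moreover have "\<forall>i>n. reduce_exp D (e i) = 0" using e(1) by simp
  moreover have "\<forall>i. reduce_exp D (e i) \<le> D" using reduce_exp_le_modulus[OF assms(1)] by blast
  ultimately show ?thesis unfolding reduced_exponents_def by blast
qed

lemma monomial_fun_in_proj_RM:
  assumes "e \<in> reduced_exponents (card (UNIV :: 'a::{finite,field} set) - 1) n k"
  shows "(monomial_fun n e :: (nat \<Rightarrow> 'a) \<Rightarrow> 'a) \<in> proj_RM n k"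
proof -
  let ?D = "card (UNIV :: 'a set) - 1"
  have e: "\<forall>i>n. e i = 0" "(\<Sum>i\<le>n. e i) mod ?D = k mod ?D" "(\<Sum>i\<le>n. e i) \<le> k"
    using assms by (auto simp: reduced_exponents_def)
  obtain i0 where i0: "e i0 \<noteq> 0" using assms by (auto simp: reduced_exponents_def)
  then have "i0 \<le> n" using e(1) by (meson not_le)
  obtain t where t: "k = (\<Sum>i\<le>n. e i) + ?D * t"
    using e(2,3) by (metis dvdE le_add_diff_inverse mod_eq_dvd_iff_nat)
  define e' where "e' = e(i0 := e i0 + ?D * t)"
  have "(\<Sum>i\<le>n. e' i) = e' i0 + (\<Sum>i\<le>n. (e'(i0 := 0)) i)"
    "(\<Sum>i\<le>n. e i) = e i0 + (\<Sum>i\<le>n. (e(i0 := 0)) i)"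
    using \<open>i0 \<le> n\<close> by (intro sum_eq_fun_upd_zero; simp)+
  then have e'_mon: "e' \<in> monomials n k"
    using e(1) t \<open>i0 \<le> n\<close> by (auto simp: monomials_def e'_def)
  have same_fun: "(\<Prod>i\<le>n. p i ^ e' i) = (\<Prod>i\<le>n. p i ^ e i)" for p :: "nat \<Rightarrow> 'a"
    by (rule prod.cong) (use i0 finite_field_power_add_multiple[of "e i0" "p i0" t] in \<open>auto simp: e'_def\<close>)
  have eval: "hom_eval n k (\<lambda>f. if f = e' then 1 else 0) p = (\<Prod>i\<le>n. p i ^ e i)"
    for p :: "nat \<Rightarrow> 'a"
  proof -
    have "hom_eval n k (\<lambda>f. if f = e' then 1 else 0) p
        = (\<Sum>f\<in>monomials n k. if f = e' then \<Prod>i\<le>n. p i ^ f i else 0)"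
      unfolding hom_eval_def by (rule sum.cong) auto
    then show ?thesis using e'_mon same_fun by (simp add: finite_monomials)
  qed
  have "(monomial_fun n e :: (nat \<Rightarrow> 'a) \<Rightarrow> 'a) =
      (\<lambda>p. if p \<in> proj_points n then hom_eval n k (\<lambda>f. if f = e' then 1 else 0) p else 0)"
    by (rule ext) (simp add: monomial_fun_def eval)
  then show ?thesis unfolding proj_RM_def by blast
qed

lemma proj_RM_subset_span_monomial_funs:
  assumes "k \<ge> 1"
  shows "(proj_RM n k :: ((nat \<Rightarrow> 'a::{finite,field}) \<Rightarrow> 'a) set) \<subseteq>
    module.span (\<lambda>(a::'a) f x. a * f x)
      (monomial_fun n ` reduced_exponents (card (UNIV :: 'a set) - 1) n k)"
proof
  let ?D = "card (UNIV :: 'a set) - 1"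
  interpret fv: vector_space "\<lambda>(a::'a) (f::(nat \<Rightarrow> 'a) \<Rightarrow> 'a) x. a * f x"
    by (rule vector_space_fun_scale)
  let ?red = "\<lambda>e i. reduce_exp ?D (e i)"
  fix x assume "x \<in> (proj_RM n k :: ((nat \<Rightarrow> 'a) \<Rightarrow> 'a) set)"
  then obtain c where x: "x = (\<lambda>p. if p \<in> proj_points n then hom_eval n k c p else 0)"
    unfolding proj_RM_def by auto
  have "x = (\<Sum>e\<in>monomials n k. (\<lambda>(a::'a) f x. a * f x) (c e) (monomial_fun n (?red e)))"
    by (auto simp: fun_eq_iff sum_fun_apply x hom_eval_def monomial_fun_def
        finite_field_power_reduce_exp[simplified])
  also have "\<dots> \<in> fv.span (monomial_fun n ` reduced_exponents ?D n k)"
    using card_UNIV_field_ge_two[where 'a = 'a] assms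
    by (intro fv.span_sum fv.span_scale fv.span_base imageI reduce_exp_in_reduced_exponents) auto
  finally show "x \<in> fv.span (monomial_fun n ` reduced_exponents ?D n k)" .
qed

text \<open>On the points with leading 1 in position j the coordinates j + 1, ..., n range over all of
  F_q^(n - j), and exponents differing only in position j give the same function there.\<close>

lemma group_coeff_sum_zero:
  fixes u :: "(nat \<Rightarrow> nat) \<Rightarrow> 'a::{finite,field}"
  assumes E: "E \<subseteq> reduced_exponents (card (UNIV :: 'a set) - 1) n k"
    and below: "\<forall>e\<in>E. \<forall>i<j. e i = 0" and "j \<le> n"
    and vanish: "\<forall>p\<in>proj_points n. (\<forall>i<j. p i = 0) \<longrightarrow> (\<Sum>e\<in>E. u e * (\<Prod>i\<le>n. p i ^ e i)) = 0"
  shows "(\<Sum>e\<in>{e\<in>E. e(j := 0) = t}. u e) = 0"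
proof -
  let ?D = "card (UNIV :: 'a set) - 1"
  let ?S = "{j<..n}"
  let ?drop = "\<lambda>e. e(j := 0)"
  define w where "w t = (\<Sum>e\<in>{e\<in>E. ?drop e = t}. u e)" for t
  have fin: "finite E" using E finite_reduced_exponents finite_subset by blast
  have bounds: "e i \<le> ?D" "n < i \<Longrightarrow> e i = 0" if "e \<in> E" for e i
    using E that by (auto simp: reduced_exponents_def)
  have affine: "(\<Sum>e\<in>E. u e * (\<Prod>i\<in>?S. y i ^ e i)) = 0" for y :: "nat \<Rightarrow> 'a"
  proof -
    define p where "p i = (if i < j then 0 else if i = j then 1 else if i \<le> n then y i else 0)"
      for i
    have p: "p \<in> proj_points n" "\<forall>i<j. p i = 0"
      using \<open>j \<le> n\<close> by (auto simp: proj_points_def p_def)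
    have "(\<Prod>i\<le>n. p i ^ e i) = (\<Prod>i\<in>?S. y i ^ e i)" if "e \<in> E" for e
    proof -
      have "(\<Prod>i\<le>n. p i ^ e i) = (\<Prod>i\<in>?S. p i ^ e i)"
        by (rule prod.mono_neutral_right) (use below that in \<open>auto simp: p_def\<close>)
      also have "\<dots> = (\<Prod>i\<in>?S. y i ^ e i)" by (rule prod.cong) (auto simp: p_def)
      finally show ?thesis .
    qed
    then have "(\<Sum>e\<in>E. u e * (\<Prod>i\<in>?S. y i ^ e i)) = (\<Sum>e\<in>E. u e * (\<Prod>i\<le>n. p i ^ e i))"
      by simp
    also have "\<dots> = 0" using vanish p by blast
    finally show ?thesis .
  qed
  have groups: "\<forall>t\<in>?drop ` E. w t = 0"
  proof (rule coeff_zero_if_reduced_vanishing[where S = ?S])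
    show "finite ?S" "finite (?drop ` E)" using fin by simp_all
    show "\<forall>t\<in>?drop ` E. (\<forall>i. t i \<le> ?D) \<and> (\<forall>i. i \<notin> ?S \<longrightarrow> t i = 0)"
      using bounds below by (auto simp: not_less)
    show "\<forall>y. (\<Sum>t\<in>?drop ` E. w t * (\<Prod>i\<in>?S. y i ^ t i)) = 0"
    proof
      fix y :: "nat \<Rightarrow> 'a"
      have "(\<Sum>t\<in>?drop ` E. w t * (\<Prod>i\<in>?S. y i ^ t i))
          = (\<Sum>t\<in>?drop ` E. \<Sum>e\<in>{e\<in>E. ?drop e = t}. u e * (\<Prod>i\<in>?S. y i ^ e i))"
        unfolding w_def sum_distrib_right by (intro sum.cong refl) (auto intro!: prod.cong)
      also have "\<dots> = (\<Sum>e\<in>E. u e * (\<Prod>i\<in>?S. y i ^ e i))"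
        by (rule sum.group) (use fin in auto)
      finally show "(\<Sum>t\<in>?drop ` E. w t * (\<Prod>i\<in>?S. y i ^ t i)) = 0" using affine by simp
    qed
  qed
  show ?thesis
  proof (cases "t \<in> ?drop ` E")
    case False
    then have "{e\<in>E. e(j := 0) = t} = {}" by blast
    then show ?thesis by (metis sum.empty)
  qed (use groups in \<open>auto simp: w_def\<close>)
qed

text \<open>Induction on the number n + 1 - j of positions the leading 1 can still occupy: exponents
  with e j = 0 are handled by the induction hypothesis on the points with p j = 0, and within a
  group of group_coeff_sum_zero at most one exponent has e j \<noteq> 0.\<close>

lemma reduced_monomial_coeff_zero:
  fixes u :: "(nat \<Rightarrow> nat) \<Rightarrow> 'a::{finite,field}"
  assumes "E \<subseteq> reduced_exponents (card (UNIV :: 'a set) - 1) n k"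
    and "\<forall>e\<in>E. \<forall>i<j. e i = 0"
    and "\<forall>p\<in>proj_points n. (\<forall>i<j. p i = 0) \<longrightarrow> (\<Sum>e\<in>E. u e * (\<Prod>i\<le>n. p i ^ e i)) = 0"
    and "e \<in> E"
  shows "u e = 0"
  using assms
proof (induction "n + 1 - j" arbitrary: j E e)
  case 0
  have "e i = 0" for i
  proof (cases "i \<le> n")
    case True
    then show ?thesis using 0 by auto
  next
    case False
    then show ?thesis using 0 by (auto simp: reduced_exponents_def)
  qed
  then show ?case using 0 by (auto simp: reduced_exponents_def)
next
  case (Suc m)
  let ?D = "card (UNIV :: 'a set) - 1"
  have "j \<le> n" using Suc.hyps(2) by simp
  have fin: "finite E" using Suc.prems(1) finite_reduced_exponents finite_subset by blast
  have zero_at_j: "u e' = 0" if "e' \<in> E" "e' j = 0" for e'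
  proof (rule Suc.hyps(1)[of "j + 1" "{e\<in>E. e j = 0}"])
    show "m = n + 1 - (j + 1)" using Suc.hyps(2) by simp
    show "{e\<in>E. e j = 0} \<subseteq> reduced_exponents ?D n k" using Suc.prems(1) by auto
    show "\<forall>e\<in>{e\<in>E. e j = 0}. \<forall>i<j + 1. e i = 0" using Suc.prems(2) by (auto simp: less_Suc_eq)
    show "e' \<in> {e\<in>E. e j = 0}" using that by simp
    show "\<forall>p\<in>proj_points n. (\<forall>i<j + 1. p i = 0) \<longrightarrow>
        (\<Sum>e\<in>{e\<in>E. e j = 0}. u e * (\<Prod>i\<le>n. p i ^ e i)) = 0"
    proof (intro ballI impI)
      fix p :: "nat \<Rightarrow> 'a" assume p: "p \<in> proj_points n" "\<forall>i<j + 1. p i = 0"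
      have "(\<Prod>i\<le>n. p i ^ e i) = 0" if "e \<in> E - {e\<in>E. e j = 0}" for e
        using that p(2) \<open>j \<le> n\<close> by (intro prod_zero) auto
      then have "(\<Sum>e\<in>{e\<in>E. e j = 0}. u e * (\<Prod>i\<le>n. p i ^ e i))
          = (\<Sum>e\<in>E. u e * (\<Prod>i\<le>n. p i ^ e i))"
        by (intro sum.mono_neutral_left) (use fin in auto)
      also have "\<dots> = 0" using Suc.prems(3) p by auto
      finally show "(\<Sum>e\<in>{e\<in>E. e j = 0}. u e * (\<Prod>i\<le>n. p i ^ e i)) = 0" .
    qed
  qed
  show ?case
  proof (cases "e j = 0")
    case True
    then show ?thesis using zero_at_j Suc.prems(4) by blast
  next
    case False
    let ?G = "{e'\<in>E. e'(j := 0) = e(j := 0)}"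
    have "u e' = 0" if "e' \<in> ?G - {e}" for e'
    proof (cases "e' j = 0")
      case False': False
      have "e' = e"
        by (rule reduced_exponents_eq_if_same_tail)
          (use that Suc.prems(1,4) \<open>j \<le> n\<close> False False' in auto)
      then show ?thesis using that by simp
    qed (use zero_at_j that in auto)
    then have "(\<Sum>e'\<in>?G. u e') = u e"
      using sum.remove[of ?G e u] fin Suc.prems(4) by (simp add: sum.neutral)
    moreover have "(\<Sum>e'\<in>?G. u e') = 0"
      by (rule group_coeff_sum_zero) (use Suc.prems \<open>j \<le> n\<close> in auto)
    ultimately show ?thesis by simp
  qed
qed

lemma monomial_funs_coeff_zero:
  fixes u :: "(nat \<Rightarrow> nat) \<Rightarrow> 'a::{finite,field}"
  assumes "E \<subseteq> reduced_exponents (card (UNIV :: 'a set) - 1) n k"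
    and "\<forall>p\<in>proj_points n. (\<Sum>e\<in>E. u e * monomial_fun n e p) = 0"
    and "e \<in> E"
  shows "u e = 0"
  using reduced_monomial_coeff_zero[where j = 0 and E = E and n = n and k = k] assms
  by (simp add: monomial_fun_def)

lemma inj_on_monomial_fun:
  "inj_on (monomial_fun n :: _ \<Rightarrow> (nat \<Rightarrow> 'a::{finite,field}) \<Rightarrow> 'a)
     (reduced_exponents (card (UNIV :: 'a set) - 1) n k)"
proof (rule inj_onI, rule ccontr)
  fix e e'
  assume R: "e \<in> reduced_exponents (card (UNIV :: 'a set) - 1) n k"
      "e' \<in> reduced_exponents (card (UNIV :: 'a set) - 1) n k"
    and eq: "(monomial_fun n e :: (nat \<Rightarrow> 'a) \<Rightarrow> 'a) = monomial_fun n e'" and "e \<noteq> e'"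
  define u where "u f = (if f = e then 1 else - 1 :: 'a)" for f
  have "\<forall>p\<in>proj_points n. (\<Sum>f\<in>{e, e'}. u f * monomial_fun n f p) = 0"
    using \<open>e \<noteq> e'\<close> eq by (simp add: u_def)
  then have "u e = 0"
    using monomial_funs_coeff_zero[where E = "{e, e'}" and u = u] R by simp
  then show False by (simp add: u_def)
qed

lemma independent_monomial_funs:
  "\<not> module.dependent (\<lambda>(a::'a::{finite,field}) (f::(nat \<Rightarrow> 'a) \<Rightarrow> 'a) x. a * f x)
     (monomial_fun n ` reduced_exponents (card (UNIV :: 'a set) - 1) n k)"
proof -
  let ?R = "reduced_exponents (card (UNIV :: 'a set) - 1) n k"
  interpret fv: vector_space "\<lambda>(a::'a) (f::(nat \<Rightarrow> 'a) \<Rightarrow> 'a) x. a * f x"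
    by (rule vector_space_fun_scale)
  have "u v = 0"
    if t_sub: "t \<subseteq> monomial_fun n ` ?R" and sum0: "(\<Sum>w\<in>t. (\<lambda>x. u w * w x)) = 0"
      and "v \<in> t"
    for t :: "((nat \<Rightarrow> 'a) \<Rightarrow> 'a) set" and u v
  proof -
    define E where "E = {e \<in> ?R. monomial_fun n e \<in> t}"
    have t: "t = monomial_fun n ` E" using t_sub unfolding E_def by auto
    have inj: "inj_on (monomial_fun n :: _ \<Rightarrow> (nat \<Rightarrow> 'a) \<Rightarrow> 'a) E"
      by (rule inj_on_subset[OF inj_on_monomial_fun]) (auto simp: E_def)
    obtain e where "e \<in> E" "v = monomial_fun n e" using \<open>v \<in> t\<close> t by blast
    moreover have "\<forall>p\<in>proj_points n. (\<Sum>e\<in>E. (u \<circ> monomial_fun n) e * monomial_fun n e p) = 0"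
      using fun_cong[OF sum0] t by (simp add: sum_fun_apply sum.reindex[OF inj])
    ultimately show ?thesis
      using monomial_funs_coeff_zero[where E = E and u = "u \<circ> monomial_fun n"] E_def by auto
  qed
  then show ?thesis unfolding fv.independent_explicit_module by blast
qed

lemma code_dim_proj_RM:
  assumes "k \<ge> 1"
  shows "code_dim (proj_RM n k :: ((nat \<Rightarrow> 'a::{finite,field}) \<Rightarrow> 'a) set)
    = card (reduced_exponents (card (UNIV :: 'a set) - 1) n k)"
proof -
  interpret fv: vector_space "\<lambda>(a::'a) (f::(nat \<Rightarrow> 'a) \<Rightarrow> 'a) x. a * f x"
    by (rule vector_space_fun_scale)
  let ?R = "reduced_exponents (card (UNIV :: 'a set) - 1) n k"
  let ?B = "monomial_fun n ` ?R :: ((nat \<Rightarrow> 'a) \<Rightarrow> 'a) set"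
  let ?V = "proj_RM n k :: ((nat \<Rightarrow> 'a) \<Rightarrow> 'a) set"
  have "fv.span ?V = fv.span ?B"
  proof (rule antisym)
    show "fv.span ?V \<subseteq> fv.span ?B"
      using fv.span_mono[OF proj_RM_subset_span_monomial_funs[OF assms]] fv.span_span by simp
    show "fv.span ?B \<subseteq> fv.span ?V"
      by (intro fv.span_mono image_subsetI monomial_fun_in_proj_RM)
  qed
  then have "fv.dim ?V = card ?B"
    using fv.span_eq_dim fv.dim_eq_card_independent[OF independent_monomial_funs] by metis
  then show ?thesis
    unfolding code_dim_def using card_image[OF inj_on_monomial_fun] by simp
qed

section \<open>Counting reduced exponent vectors\<close>

definition leading_index :: "(nat \<Rightarrow> nat) \<Rightarrow> nat" where
  "leading_index e = (LEAST i. e i \<noteq> 0)"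

definition cyclic_succ :: "nat \<Rightarrow> nat \<Rightarrow> nat" where
  "cyclic_succ D v = (if v < D then v + 1 else 1)"

definition bump_leading :: "nat \<Rightarrow> (nat \<Rightarrow> nat) \<Rightarrow> nat \<Rightarrow> nat" where
  "bump_leading D e = e(leading_index e := cyclic_succ D (e (leading_index e)))"

lemma leading_index_nonzero: "e i \<noteq> 0 \<Longrightarrow> e (leading_index e) \<noteq> 0"
  unfolding leading_index_def by (rule LeastI)

lemma less_leading_index_zero: "i < leading_index e \<Longrightarrow> e i = 0"
  unfolding leading_index_def using not_less_Least by blast

lemma leading_index_eqI: "e j \<noteq> 0 \<Longrightarrow> (\<And>i. i < j \<Longrightarrow> e i = 0) \<Longrightarrow> leading_index e = j"
  unfolding leading_index_def by (rule Least_equality) (auto simp: not_less[symmetric])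

lemma inj_on_cyclic_succ: "inj_on (cyclic_succ D) {1..D}"
  unfolding inj_on_def cyclic_succ_def by auto

lemma leading_index_le_if_reduced:
  assumes "e \<in> reduced_exponents D n k"
  shows "leading_index e \<le> n" "e (leading_index e) \<in> {1..D}"
proof -
  have e: "\<forall>i. e i \<le> D" "\<forall>i>n. e i = 0" "\<exists>i. e i \<noteq> 0"
    using assms by (auto simp: reduced_exponents_def)
  then have nz: "e (leading_index e) \<noteq> 0" using leading_index_nonzero by blast
  then show "leading_index e \<le> n" using e(2) by (meson not_le)
  show "e (leading_index e) \<in> {1..D}" using nz e(1) by (simp add: Suc_le_eq)
qed

lemma sum_bump_leading:
  assumes "e \<in> reduced_exponents D n k"
  shows "(\<Sum>i\<le>n. bump_leading D e i) + (if e (leading_index e) = D then D else 0)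
    = (\<Sum>i\<le>n. e i) + 1"
proof -
  let ?j = "leading_index e"
  define r where "r = (\<Sum>i\<le>n. (e(?j := 0)) i)"
  have "?j \<le> n" "e ?j \<in> {1..D}" using leading_index_le_if_reduced[OF assms] by auto
  moreover have "(\<Sum>i\<le>n. e i) = e ?j + r" "(\<Sum>i\<le>n. bump_leading D e i) = cyclic_succ D (e ?j) + r"
    using sum_eq_fun_upd_zero[where A = "{..n}" and j = ?j and f = e]
      sum_eq_fun_upd_zero[where A = "{..n}" and j = ?j and f = "bump_leading D e"] \<open>?j \<le> n\<close>
    by (simp_all add: r_def bump_leading_def)
  ultimately show ?thesis by (auto simp: cyclic_succ_def)
qed

lemma leading_index_bump_leading:
  assumes "D \<ge> 1" "e \<in> reduced_exponents D n k"
  shows "leading_index (bump_leading D e) = leading_index e"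
  by (intro leading_index_eqI) (auto simp: bump_leading_def less_leading_index_zero cyclic_succ_def)

lemma bump_leading_in_reduced_exponents:
  assumes "D \<ge> 1" "e \<in> reduced_exponents D n k"
  shows "bump_leading D e \<in> reduced_exponents D n (Suc k)"
proof -
  let ?j = "leading_index e"
  let ?s = "\<Sum>i\<le>n. bump_leading D e i"
  have e: "(\<Sum>i\<le>n. e i) mod D = k mod D" "(\<Sum>i\<le>n. e i) \<le> k" "\<forall>i>n. e i = 0"
    using assms(2) by (auto simp: reduced_exponents_def)
  have "?s mod D = Suc k mod D \<and> ?s \<le> Suc k"
  proof (cases "e ?j = D")
    case True
    then have "?s + D = Suc (\<Sum>i\<le>n. e i)" using sum_bump_leading[OF assms(2)] by simp
    then have "?s mod D = Suc (\<Sum>i\<le>n. e i) mod D" by (metis mod_add_self2)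
    then show ?thesis using e(1,2) \<open>?s + D = _\<close> by (metis mod_Suc_eq le_add1 order.trans Suc_le_mono)
  next
    case False
    then have "?s = Suc (\<Sum>i\<le>n. e i)" using sum_bump_leading[OF assms(2)] by simp
    then show ?thesis using e(1,2) by (metis mod_Suc_eq Suc_le_mono)
  qed
  moreover have "bump_leading D e ?j \<noteq> 0" "\<forall>i. bump_leading D e i \<le> D"
    "\<forall>i>n. bump_leading D e i = 0"
    using assms leading_index_le_if_reduced(1)[OF assms(2)]
    by (auto simp: bump_leading_def reduced_exponents_def cyclic_succ_def)
  ultimately show ?thesis unfolding reduced_exponents_def by blast
qed

lemma inj_on_bump_leading:
  assumes "D \<ge> 1"
  shows "inj_on (bump_leading D) (reduced_exponents D n k)"
proof (rule inj_onI)
  fix e e' assume e: "e \<in> reduced_exponents D n k" and e': "e' \<in> reduced_exponents D n k"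
    and eq: "bump_leading D e = bump_leading D e'"
  define j where "j = leading_index e"
  have "leading_index e' = j"
    using eq leading_index_bump_leading[OF assms] e e' by (metis j_def)
  then have upd: "e(j := cyclic_succ D (e j)) = e'(j := cyclic_succ D (e' j))"
    using eq by (simp add: bump_leading_def j_def)
  then have "e j = e' j"
    using inj_on_cyclic_succ[of D] leading_index_le_if_reduced(2) e e' \<open>leading_index e' = j\<close>
    by (metis fun_upd_same inj_onD j_def)
  with upd show "e = e'" by (metis fun_upd_triv fun_upd_upd)
qed

lemma exists_leading_one_exponent:
  assumes "D \<ge> 1" "k \<le> n * D"
  shows "\<exists>z. z 0 = 1 \<and> (\<forall>i>n. z i = 0) \<and> (\<forall>i. z i \<le> D) \<and> (\<Sum>i\<le>n. z i) = Suc k"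
  using assms(2)
proof (induction n arbitrary: k)
  case 0
  then show ?case using assms(1) by (intro exI[of _ "\<lambda>i. if i = 0 then 1 else 0"]) auto
next
  case (Suc n)
  show ?case
  proof (cases "k \<le> n * D")
    case True
    then obtain z where z: "z 0 = 1" "\<forall>i>n. z i = 0" "\<forall>i. z i \<le> D" "(\<Sum>i\<le>n. z i) = Suc k"
      using Suc.IH by blast
    then show ?thesis by (intro exI[of _ z]) auto
  next
    case False
    then obtain z where z: "z 0 = 1" "\<forall>i>n. z i = 0" "\<forall>i. z i \<le> D" "(\<Sum>i\<le>n. z i) = Suc (n * D)"
      using Suc.IH[of "n * D"] by blast
    define z' where "z' = z(Suc n := k - n * D)"
    have "(\<Sum>i\<le>n. z' i) = (\<Sum>i\<le>n. z i)" by (rule sum.cong) (auto simp: z'_def)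
    then have "(\<Sum>i\<le>Suc n. z' i) = Suc k" using z(4) False by (simp add: z'_def)
    moreover have "k - n * D \<le> D" using Suc.prems by simp
    ultimately show ?thesis using z by (intro exI[of _ z']) (auto simp: z'_def)
  qed
qed

lemma card_reduced_exponents_less_Suc:
  assumes "D \<ge> 1" "k < n * D"
  shows "card (reduced_exponents D n k) < card (reduced_exponents D n (Suc k))"
proof -
  have "k \<le> n * D" using assms(2) by simp
  then obtain z where z: "z 0 = 1" "\<forall>i>n. z i = 0" "\<forall>i. z i \<le> D" "(\<Sum>i\<le>n. z i) = Suc k"
    using exists_leading_one_exponent[OF assms(1)] by blast
  moreover have "\<exists>i. z i \<noteq> 0" using z(1) by (intro exI[of _ 0]) simp
  ultimately have z_mem: "z \<in> reduced_exponents D n (Suc k)"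
    unfolding reduced_exponents_def by simp
  have "z \<notin> bump_leading D ` reduced_exponents D n k"
  proof
    assume "z \<in> bump_leading D ` reduced_exponents D n k"
    then obtain e where e: "e \<in> reduced_exponents D n k" "z = bump_leading D e" by blast
    have "leading_index e = 0"
      using leading_index_bump_leading[OF assms(1) e(1)] e(2) z(1)
      by (metis leading_index_eqI not_less_zero zero_neq_one)
    moreover have "cyclic_succ D (e 0) = 1"
      using e(2) z(1) \<open>leading_index e = 0\<close> by (simp add: bump_leading_def)
    moreover have "e 0 \<in> {1..D}"
      using leading_index_le_if_reduced(2)[OF e(1)] \<open>leading_index e = 0\<close> by simp
    ultimately have "e (leading_index e) = D" unfolding cyclic_succ_def by (cases "e 0 < D") auto
    then have "(\<Sum>i\<le>n. e i) = k + D" using sum_bump_leading[OF e(1)] e(2) z(4) by simp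
    then show False using e(1) assms(1) by (simp add: reduced_exponents_def)
  qed
  then have "bump_leading D ` reduced_exponents D n k \<subset> reduced_exponents D n (Suc k)"
    using bump_leading_in_reduced_exponents[OF assms(1)] z_mem by blast
  then have "card (bump_leading D ` reduced_exponents D n k) < card (reduced_exponents D n (Suc k))"
    by (rule psubset_card_mono[OF finite_reduced_exponents])
  then show ?thesis using card_image[OF inj_on_bump_leading[OF assms(1)]] by simp
qed

lemma card_reduced_exponents_add_le:
  assumes "D \<ge> 1" "a \<le> b" "b \<le> n * D"
  shows "card (reduced_exponents D n a) + (b - a) \<le> card (reduced_exponents D n b)"
  using assms(2,3)
proof (induction b rule: dec_induct)
  case (step m)
  then have "card (reduced_exponents D n m) < card (reduced_exponents D n (Suc m))"
    by (intro card_reduced_exponents_less_Suc[OF assms(1)]) auto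
  then show ?case using step by (simp add: Suc_diff_le)
qed simp

theorem mainTheorem2:
  fixes n a b :: nat
  assumes "n \<ge> 1"
    and "1 \<le> a" and "a < b" and "b \<le> n * (card (UNIV :: 'a set) - 1)"
  shows "int (code_dim (proj_RM n b :: ((nat \<Rightarrow> 'a::{finite,field}) \<Rightarrow> 'a) set))
           - int (code_dim (proj_RM n a :: ((nat \<Rightarrow> 'a) \<Rightarrow> 'a) set))
         \<ge> int b - int a"
proof -
  let ?D = "card (UNIV :: 'a set) - 1"
  have "?D \<ge> 1" using card_UNIV_field_ge_two[where 'a = 'a] by simp
  then have "card (reduced_exponents ?D n a) + (b - a) \<le> card (reduced_exponents ?D n b)"
    using assms(3,4) by (intro card_reduced_exponents_add_le) auto
  moreover have "code_dim (proj_RM n a :: ((nat \<Rightarrow> 'a) \<Rightarrow> 'a) set) = card (reduced_exponents ?D n a)"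
    "code_dim (proj_RM n b :: ((nat \<Rightarrow> 'a) \<Rightarrow> 'a) set) = card (reduced_exponents ?D n b)"
    using assms(2,3) by (simp_all add: code_dim_proj_RM)
  ultimately show ?thesis using assms(3) by linarith
qed

end
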